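(* Consider the discrete-time system $x(t+1) = A x(t) + B u(t) + C v(t) + w$ with $A \in \mathbb{R}^{d_x\times d_x}$, $B\in\mathbb{R}^{d_x\times d_u}$, $C \in\mathbb{R}^{d_x\times d_v}$, constant $w\in\mathbb{R}^{d_x}$, control constraint $\mathcal U = \{u\in\mathbb{R}^{d_u}\mid \underline u\leq u\leq\overline u\}$ (with $\underline u \leq \overline u$), disturbance constraint $\mathcal V = \langle c_{\mathcal V}\mid G_{\mathcal V}\rangle$ with $G_{\mathcal V}\in\mathbb{R}^{d_v\times n_{\mathcal V}}$, and state constraint $\mathcal X = \{x\in\mathbb{R}^{d_x}\mid\underline x\leq x\leq\overline x\}$. Let $T\geq 0$ be an integer. Let $G_{\mathcal I} \in \mathbb{R}^{d_x\times n_{\mathcal I}}$, $\alpha \in \mathbb{R}^{d_x}$, $\gamma\in\mathbb{R}^{n_{\mathcal I}}$ with $\gamma \geq 0$, $\Gamma = \mathrm{diag}(\gamma)$, $\mathcal I = \langle \alpha \mid G_{\mathcal I}\Gamma\rangle$. For $t = 0,\ldots,T-1$ let $\beta(t)\in\mathbb{R}^{d_u}$, $\Phi(t)\in\mathbb{R}^{d_u\times n_{\mathcal I}}$, $G_{\mathcal F(t)}\in\mathbb{R}^{d_u\times m_t}$ and $\psi(t)\in\mathbb{R}^{m_t}$ with $\psi(t)\geq 0$. Suppose that for all $t = 0,\ldots,T$ \[ A^t\alpha + \sum_{s=0}^{t-1}A^{t-1-s}\big(B\beta(s) + Cc_{\mathcal V} + w\big) - \Big|A^tG_{\mathcal I}\Gamma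 + \sum_{s=0}^{t-1}A^{t-1-s}B\Phi(s)\Big|\mathbf{1}_{n_{\mathcal I}} - \sum_{s=0}^{t-1}|A^{t-1-s}BG_{\mathcal F(s)}|\psi(s) - \sum_{s=0}^{t-1}|A^{t-1-s}CG_{\mathcal V}|\mathbf{1}_{n_{\mathcal V}} \geq \underline x, \] \[ A^t\alpha + \sum_{s=0}^{t-1}A^{t-1-s}\big(B\beta(s) + Cc_{\mathcal V} + w\big) + \Big|A^tG_{\mathcal I}\Gamma + \sum_{s=0}^{t-1}A^{t-1-s}B\Phi(s)\Big|\mathbf{1}_{n_{\mathcal I}} + \sum_{s=0}^{t-1}|A^{t-1-s}BG_{\mathcal F(s)}|\psi(s) + \sum_{s=0}^{t-1}|A^{t-1-s}CG_{\mathcal V}|\mathbf{1}_{n_{\mathcal V}} \leq \overline x, \] and that for all $t = 0,\ldots,T-1$ \[ \beta(t) - |\Phi(t)|\mathbf{1}_{n_{\mathcal I}} - |G_{\mathcal F(t)}|\psi(t) \geq \underline u, \qquad \beta(t) + |\Phi(t)|\mathbf{1}_{n_{\mathcal I}} + |G_{\mathcal F(t)}|\psi(t) \leq \overline u. \] Then $\mathcal I \subseteq \mathrm{Disc}_{[0,T]}(\mathcal X)$, where $\mathrm{Disc}_{[0,T]}(\mathcal X)$ is the set of $x(0)\in\mathcal X$ for which there exists an input signal with $u(t)\in\mathcal U$ for $t=0,\ldots,T$ such that for every disturbance signal with $v(t)\in\mathcal V$ for $t = 0,\ldots,T$, the resulting trajectory satisfies $x(t)\in\mathcal X$ for all $t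=0,\ldots,T$.
   Context: Vector inequalities are elementwise; $|M|$ is the elementwise absolute value; $\mathbf{1}_n$ is the all-ones vector in $\mathbb{R}^n$. The notation $\langle c \mid G\rangle$ denotes the zonotope $\{c + G\lambda : \lambda \in [-1,1]^n\}$ with center $c$ and generator matrix $G$. $\mathrm{diag}(\gamma)$ is the diagonal matrix with $\gamma$ on its diagonal. *)

theory Defs
  imports "HOL-Analysis.Analysis"
begin

primrec matpow :: "real^'n^'n \<Rightarrow> nat \<Rightarrow> real^'n^'n" where
  "matpow A 0 = mat 1"
| "matpow A (Suc k) = A ** matpow A k"

definition vabs :: "real^'n \<Rightarrow> real^'n" where
  "vabs x = (\<chi> i. \<bar>x $ i\<bar>)"

definition mabs :: "real^'n^'m \<Rightarrow> real^'n^'m" where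
  "mabs M = (\<chi> i j. \<bar>M $ i $ j\<bar>)"

definition ones :: "real^'n" where
  "ones = (\<chi> i. 1)"

definition diagm :: "real^'n \<Rightarrow> real^'n^'n" where
  "diagm g = (\<chi> i j. if i = j then g $ i else 0)"

definition zonotope :: "real^'m \<Rightarrow> real^'n^'m \<Rightarrow> (real^'m) set" where
  "zonotope c G = {c + G *v lam | lam. \<forall>i. \<bar>lam $ i\<bar> \<le> 1}"

text \<open>A matrix with a variable number m of columns is given as the list of its columns
  col 0, ..., col (m-1).  absprod M col psi m = |M G| psi where G = [col 0 ... col (m-1)].\<close>
definition absprod :: "real^'k^'m \<Rightarrow> (nat \<Rightarrow> real^'k) \<Rightarrow> (nat \<Rightarrow> real) \<Rightarrow> nat \<Rightarrow> real^'m" where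
  "absprod M col psi m = (\<Sum>j<m. psi j *\<^sub>R vabs (M *v col j))"

primrec traj :: "real^'x^'x \<Rightarrow> real^'u^'x \<Rightarrow> real^'v^'x \<Rightarrow> real^'x \<Rightarrow> real^'x
      \<Rightarrow> (nat \<Rightarrow> real^'u) \<Rightarrow> (nat \<Rightarrow> real^'v) \<Rightarrow> nat \<Rightarrow> real^'x" where
  "traj A B C w x0 u v 0 = x0"
| "traj A B C w x0 u v (Suc t) = A *v traj A B C w x0 u v t + B *v u t + C *v v t + w"

definition Disc :: "real^'x^'x \<Rightarrow> real^'u^'x \<Rightarrow> real^'v^'x \<Rightarrow> real^'x
      \<Rightarrow> (real^'u) set \<Rightarrow> (real^'v) set \<Rightarrow> nat \<Rightarrow> (real^'x) set \<Rightarrow> (real^'x) set" where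
  "Disc A B C w U V T X = {x0 \<in> X. \<exists>u. (\<forall>t\<le>T. u t \<in> U) \<and>
      (\<forall>v. (\<forall>t\<le>T. v t \<in> V) \<longrightarrow> (\<forall>t\<le>T. traj A B C w x0 u v t \<in> X))}"

end

theory Submission
  imports Defs
begin

text \<open>Write \<open>x(0) = \<alpha> + G\<^sub>\<I>\<Gamma>l\<close> with \<open>|l| \<le> 1\<close> and use the affine feedback
  \<open>u(t) = \<beta>(t) + \<Phi>(t)l\<close>. For a disturbance \<open>v(s) = c\<^sub>\<V> + G\<^sub>\<V>\<mu>(s)\<close> with \<open>|\<mu>(s)| \<le> 1\<close>, the
  closed form of the trajectory is the nominal state plus \<open>M\<^sub>tl + \<Sigma>\<^sub>s N\<^sub>t\<^sub>,\<^sub>s\<mu>(s)\<close>, with exactly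
  the matrices \<open>M\<^sub>t, N\<^sub>t\<^sub>,\<^sub>s\<close> of the hypotheses, and each component of \<open>Ml\<close> is bounded by the
  corresponding row sum of \<open>|M|\<close>. The \<open>\<psi>\<close>-terms are only nonnegative slack, so the hypotheses
  place every \<open>u(t)\<close> and \<open>x(t)\<close> in its box.\<close>

lemma matrix_vector_mult_sum_right:
  "(M::real^'n^'m) *v (\<Sum>s\<in>S. f s) = (\<Sum>s\<in>S. M *v f s)"
  using linear_sum[OF matrix_vector_mul_linear] by (simp add: o_def)

lemma sum_matrix_vector_mult:
  "(\<Sum>s\<in>S. (M s::real^'n^'m)) *v x = (\<Sum>s\<in>S. M s *v x)"
  by (simp add: vec_eq_iff matrix_vector_mult_def sum_component sum_distrib_right sum.swap[of _ S])

lemma traj_closed_form: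
  "traj A B C w x0 u v t =
     matpow A t *v x0 + (\<Sum>s<t. matpow A (t-1-s) *v (B *v u s + C *v v s + w))"
proof (induction t)
  case 0
  then show ?case by simp
next
  case (Suc t)
  define y where "y s = B *v u s + C *v v s + w" for s
  have shift: "(\<Sum>s<t. matpow A (Suc t-1-s) *v y s) = A *v (\<Sum>s<t. matpow A (t-1-s) *v y s)"
    unfolding matrix_vector_mult_sum_right
  proof (rule sum.cong)
    fix s assume "s \<in> {..<t}"
    then have "Suc t - 1 - s = Suc (t-1-s)" by auto
    then show "matpow A (Suc t-1-s) *v y s = A *v (matpow A (t-1-s) *v y s)"
      by (simp add: matrix_vector_mul_assoc)
  qed simp
  have "traj A B C w x0 u v (Suc t) = A *v (matpow A t *v x0 + (\<Sum>s<t. matpow A (t-1-s) *v y s)) + y t"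
    using Suc by (simp add: y_def)
  also have "\<dots> = matpow A (Suc t) *v x0 + (\<Sum>s<t. matpow A (Suc t-1-s) *v y s) + y t"
    by (simp only: shift matrix_vector_right_distrib matrix_vector_mul_assoc matpow.simps)
  also have "\<dots> = matpow A (Suc t) *v x0 + (\<Sum>s<Suc t. matpow A (Suc t-1-s) *v y s)"
    by simp
  finally show ?case by (simp only: y_def)
qed

lemma traj_affine_feedback:
  assumes "\<And>s. s < t \<Longrightarrow> u s = \<beta> s + \<Phi> s *v lam"
    and "\<And>s. s < t \<Longrightarrow> v s = c + G\<^sub>v *v \<mu> s"
  shows "traj A B C w (\<alpha> + G *v lam) u v t =
      matpow A t *v \<alpha> + (\<Sum>s<t. matpow A (t-1-s) *v (B *v \<beta> s + C *v c + w))
    + (matpow A t ** G + (\<Sum>s<t. matpow A (t-1-s) ** B ** \<Phi> s)) *v lam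
    + (\<Sum>s<t. (matpow A (t-1-s) ** C ** G\<^sub>v) *v \<mu> s)"
proof -
  have "(\<Sum>s<t. matpow A (t-1-s) *v (B *v u s + C *v v s + w))
      = (\<Sum>s<t. matpow A (t-1-s) *v (B *v \<beta> s + C *v c + w)
               + (matpow A (t-1-s) ** B ** \<Phi> s) *v lam + (matpow A (t-1-s) ** C ** G\<^sub>v) *v \<mu> s)"
    using assms by (intro sum.cong) (simp_all add: matrix_vector_right_distrib
        matrix_vector_mul_assoc matrix_mul_assoc algebra_simps)
  then show ?thesis
    by (simp add: traj_closed_form sum.distrib sum_matrix_vector_mult matrix_vector_right_distrib
        matrix_vector_mult_add_rdistrib matrix_vector_mul_assoc matrix_mul_assoc algebra_simps)
qed

lemma abs_matrix_vector_le_mabs_ones: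
  assumes "\<forall>j. \<bar>lam $ j\<bar> \<le> 1"
  shows "\<bar>((M::real^'n^'m) *v lam) $ i\<bar> \<le> (mabs M *v ones) $ i"
proof -
  have "\<bar>(M *v lam) $ i\<bar> = \<bar>\<Sum>j\<in>UNIV. M$i$j * lam$j\<bar>"
    by (simp add: matrix_vector_mult_def)
  also have "\<dots> \<le> (\<Sum>j\<in>UNIV. \<bar>M$i$j * lam$j\<bar>)"
    by (rule sum_abs)
  also have "\<dots> \<le> (\<Sum>j\<in>UNIV. \<bar>M$i$j\<bar>)"
    using assms by (intro sum_mono) (auto simp: abs_mult intro: mult_left_le)
  also have "\<dots> = (mabs M *v ones) $ i"
    by (simp add: matrix_vector_mult_def mabs_def ones_def)
  finally show ?thesis .
qed

lemma abs_sum_matrix_vector_le_mabs_ones: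
  assumes "\<And>s. s \<in> S \<Longrightarrow> \<forall>j. \<bar>\<mu> s $ j\<bar> \<le> 1"
  shows "\<bar>(\<Sum>s\<in>S. (N s::real^'n^'m) *v \<mu> s) $ i\<bar> \<le> (\<Sum>s\<in>S. mabs (N s) *v ones) $ i"
proof -
  have "\<bar>(\<Sum>s\<in>S. N s *v \<mu> s) $ i\<bar> \<le> (\<Sum>s\<in>S. \<bar>(N s *v \<mu> s) $ i\<bar>)"
    unfolding sum_component by (rule sum_abs)
  also have "\<dots> \<le> (\<Sum>s\<in>S. mabs (N s) *v ones) $ i"
    unfolding sum_component using assms by (intro sum_mono abs_matrix_vector_le_mabs_ones) auto
  finally show ?thesis .
qed

lemma center_in_zonotope: "c \<in> zonotope c G"
  unfolding zonotope_def by (force intro: exI[of _ 0])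

lemma zonotope_signal_coefficients:
  assumes "\<forall>s\<in>S. v s \<in> zonotope c G"
  obtains \<mu> where "\<forall>s\<in>S. v s = c + G *v \<mu> s \<and> (\<forall>j. \<bar>\<mu> s $ j\<bar> \<le> 1)"
proof -
  have "\<forall>s\<in>S. \<exists>l. v s = c + G *v l \<and> (\<forall>j. \<bar>l $ j\<bar> \<le> 1)"
    using assms by (auto simp: zonotope_def)
  then show ?thesis
    using that by (metis bchoice)
qed

lemma absprod_nonneg:
  assumes "\<forall>j<k. p j \<ge> 0"
  shows "absprod M col p k \<ge> 0"
  using assms by (auto simp: absprod_def vabs_def less_eq_vec_def intro!: sum_nonneg)

lemma bounded_perturbation_in_box:
  fixes c P lo hi :: "real^'m" and M :: "real^'n^'m" and N :: "'s \<Rightarrow> real^'k^'m"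
  assumes lam: "\<forall>j. \<bar>lam $ j\<bar> \<le> 1" and \<mu>: "\<forall>s\<in>S. \<forall>j. \<bar>\<mu> s $ j\<bar> \<le> 1" and "P \<ge> 0"
    and lo: "lo \<le> c - mabs M *v ones - P - (\<Sum>s\<in>S. mabs (N s) *v ones)"
    and hi: "c + mabs M *v ones + P + (\<Sum>s\<in>S. mabs (N s) *v ones) \<le> hi"
  shows "lo \<le> c + M *v lam + (\<Sum>s\<in>S. N s *v \<mu> s) \<and> c + M *v lam + (\<Sum>s\<in>S. N s *v \<mu> s) \<le> hi"
proof -
  have "lo $ i \<le> (c + M *v lam + (\<Sum>s\<in>S. N s *v \<mu> s)) $ i
      \<and> (c + M *v lam + (\<Sum>s\<in>S. N s *v \<mu> s)) $ i \<le> hi $ i" for i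
  proof -
    have "\<bar>(M *v lam) $ i\<bar> \<le> (mabs M *v ones) $ i"
      using lam by (rule abs_matrix_vector_le_mabs_ones)
    moreover have "\<bar>(\<Sum>s\<in>S. N s *v \<mu> s) $ i\<bar> \<le> (\<Sum>s\<in>S. mabs (N s) *v ones) $ i"
      using \<mu> by (intro abs_sum_matrix_vector_le_mabs_ones) auto
    moreover have "P $ i \<ge> 0" "lo $ i \<le> (c - mabs M *v ones - P - (\<Sum>s\<in>S. mabs (N s) *v ones)) $ i"
      "(c + mabs M *v ones + P + (\<Sum>s\<in>S. mabs (N s) *v ones)) $ i \<le> hi $ i"
      using \<open>P \<ge> 0\<close> lo hi by (simp_all add: less_eq_vec_def)
    ultimately show ?thesis by (auto simp: abs_le_iff)
  qed
  then show ?thesis by (simp add: less_eq_vec_def)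
qed

lemma traj_affine_feedback_in_box:
  assumes lam: "\<forall>j. \<bar>lam $ j\<bar> \<le> 1"
    and u: "\<forall>s<t. u s = \<beta> s + \<Phi> s *v lam"
    and v: "\<forall>s<t. v s = c + G\<^sub>v *v \<mu> s \<and> (\<forall>j. \<bar>\<mu> s $ j\<bar> \<le> 1)"
    and "P \<ge> 0"
    and "lo \<le> matpow A t *v \<alpha> + (\<Sum>s<t. matpow A (t-1-s) *v (B *v \<beta> s + C *v c + w))
      - mabs (matpow A t ** G + (\<Sum>s<t. matpow A (t-1-s) ** B ** \<Phi> s)) *v ones - P
      - (\<Sum>s<t. mabs (matpow A (t-1-s) ** C ** G\<^sub>v) *v ones)"
    and "matpow A t *v \<alpha> + (\<Sum>s<t. matpow A (t-1-s) *v (B *v \<beta> s + C *v c + w))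
      + mabs (matpow A t ** G + (\<Sum>s<t. matpow A (t-1-s) ** B ** \<Phi> s)) *v ones + P
      + (\<Sum>s<t. mabs (matpow A (t-1-s) ** C ** G\<^sub>v) *v ones) \<le> hi"
  shows "lo \<le> traj A B C w (\<alpha> + G *v lam) u v t \<and> traj A B C w (\<alpha> + G *v lam) u v t \<le> hi"
proof -
  have "traj A B C w (\<alpha> + G *v lam) u v t =
      matpow A t *v \<alpha> + (\<Sum>s<t. matpow A (t-1-s) *v (B *v \<beta> s + C *v c + w))
    + (matpow A t ** G + (\<Sum>s<t. matpow A (t-1-s) ** B ** \<Phi> s)) *v lam
    + (\<Sum>s<t. (matpow A (t-1-s) ** C ** G\<^sub>v) *v \<mu> s)"
    using u v by (intro traj_affine_feedback) auto
  with assms show ?thesis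
    by (simp add: bounded_perturbation_in_box)
qed

theorem proposition6p2:
  fixes A :: "real^'x^'x" and B :: "real^'u^'x" and C :: "real^'v^'x" and w :: "real^'x"
    and ulo uhi :: "real^'u" and xlo xhi :: "real^'x"
    and cV :: "real^'v" and GV :: "real^'nv^'v"
    and T :: nat
    and GI :: "real^'ni^'x" and \<alpha> :: "real^'x" and \<gamma> :: "real^'ni"
    and \<beta> :: "nat \<Rightarrow> real^'u" and \<Phi> :: "nat \<Rightarrow> real^'ni^'u"
    and m :: "nat \<Rightarrow> nat" and GF :: "nat \<Rightarrow> nat \<Rightarrow> real^'u" and \<psi> :: "nat \<Rightarrow> nat \<Rightarrow> real"
  assumes ulo_uhi: "ulo \<le> uhi"
    and gamma_nonneg: "\<gamma> \<ge> 0"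
    and psi_nonneg: "\<forall>t<T. \<forall>j<m t. \<psi> t j \<ge> 0"
    and state_lo: "\<forall>t\<le>T.
       matpow A t *v \<alpha> + (\<Sum>s<t. matpow A (t-1-s) *v (B *v \<beta> s + C *v cV + w))
       - mabs (matpow A t ** GI ** diagm \<gamma> + (\<Sum>s<t. matpow A (t-1-s) ** B ** \<Phi> s)) *v ones
       - (\<Sum>s<t. absprod (matpow A (t-1-s) ** B) (GF s) (\<psi> s) (m s))
       - (\<Sum>s<t. mabs (matpow A (t-1-s) ** C ** GV) *v ones) \<ge> xlo"
    and state_hi: "\<forall>t\<le>T.
       matpow A t *v \<alpha> + (\<Sum>s<t. matpow A (t-1-s) *v (B *v \<beta> s + C *v cV + w))
       + mabs (matpow A t ** GI ** diagm \<gamma> + (\<Sum>s<t. matpow A (t-1-s) ** B ** \<Phi> s)) *v ones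
       + (\<Sum>s<t. absprod (matpow A (t-1-s) ** B) (GF s) (\<psi> s) (m s))
       + (\<Sum>s<t. mabs (matpow A (t-1-s) ** C ** GV) *v ones) \<le> xhi"
    and input_lo: "\<forall>t<T. \<beta> t - mabs (\<Phi> t) *v ones - absprod (mat 1) (GF t) (\<psi> t) (m t) \<ge> ulo"
    and input_hi: "\<forall>t<T. \<beta> t + mabs (\<Phi> t) *v ones + absprod (mat 1) (GF t) (\<psi> t) (m t) \<le> uhi"
  shows "zonotope \<alpha> (GI ** diagm \<gamma>)
         \<subseteq> Disc A B C w {u. ulo \<le> u \<and> u \<le> uhi} (zonotope cV GV) T {x. xlo \<le> x \<and> x \<le> xhi}"
proof
  fix x0 assume "x0 \<in> zonotope \<alpha> (GI ** diagm \<gamma>)"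
  then obtain lam where x0: "x0 = \<alpha> + (GI ** diagm \<gamma>) *v lam" and lam: "\<forall>j. \<bar>lam $ j\<bar> \<le> 1"
    by (auto simp: zonotope_def)
  define u where "u t = (if t < T then \<beta> t + \<Phi> t *v lam else ulo)" for t
  have u_in_U: "ulo \<le> u t \<and> u t \<le> uhi" for t
  proof (cases "t < T")
    case True
    have "absprod (mat 1) (GF t) (\<psi> t) (m t) \<ge> 0"
      using psi_nonneg True by (intro absprod_nonneg) auto
    then show ?thesis
      using bounded_perturbation_in_box[OF lam, where S = "{}" and c = "\<beta> t" and M = "\<Phi> t"]
        input_lo input_hi True
      by (simp add: u_def) blast
  qed (use ulo_uhi in \<open>simp add: u_def\<close>)
  have x_in_X: "xlo \<le> traj A B C w x0 u v t \<and> traj A B C w x0 u v t \<le> xhi"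
    if v_in_V: "\<forall>s\<le>T. v s \<in> zonotope cV GV" and "t \<le> T" for v t
  proof -
    obtain \<mu> where \<mu>: "\<forall>s\<in>{..T}. v s = cV + GV *v \<mu> s \<and> (\<forall>j. \<bar>\<mu> s $ j\<bar> \<le> 1)"
      using zonotope_signal_coefficients[of "{..T}" v cV GV] v_in_V by auto
    have "(\<Sum>s<t. absprod (matpow A (t-1-s) ** B) (GF s) (\<psi> s) (m s)) \<ge> 0"
      using psi_nonneg \<open>t \<le> T\<close> by (intro sum_nonneg absprod_nonneg) auto
    then show ?thesis
      unfolding x0 using \<mu> \<open>t \<le> T\<close> state_lo state_hi
      by (intro traj_affine_feedback_in_box[OF lam]) (auto simp: u_def matrix_mul_assoc diff_diff_eq add.assoc)
  qed
  have "xlo \<le> x0 \<and> x0 \<le> xhi"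
    using x_in_X[of "\<lambda>_. cV" 0] by (simp add: center_in_zonotope)
  then show "x0 \<in> Disc A B C w {u. ulo \<le> u \<and> u \<le> uhi} (zonotope cV GV) T {x. xlo \<le> x \<and> x \<le> xhi}"
    unfolding Disc_def using u_in_U x_in_X by blast
qed

end
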